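(* Let $X$ be a real Banach space, let $A\subset X\times X^*$ be self-cancelling and suppose that $A^\vdash$ is maximal monotone. Then for any $(x_0,x_0^* )\in X\times X^*$ the operator $T=A^\vdash+\{(x_0,x_0^* )\}=\{(y+x_0,y^*+x_0^* )\mid (y,y^* )\in A^\vdash\}$ is non-enlargeable; equivalently, $\{(x,x^* )\mid \varphi_T(x,x^* )<\infty\}=T$.
   Context: $\langle x,x^*\rangle=x^*(x)$. Operators $X\rightrightarrows X^*$ are subsets of $X\times X^*$; monotone means $\langle x-y,x^*-y^*\rangle\ge0$ on pairs in the operator, maximal monotone means monotone and maximal under inclusion among monotone operators. $A$ is self-cancelling if it is a linear subspace of $X\times X^*$ with $\langle x,x^*\rangle=0$ for all $(x,x^* )\in A$. $B^\vdash=\{(y,y^* )\mid \langle x,y^*\rangle+\langle y,x^*\rangle=0\ \forall (x,x^* )\in B\}$. For maximal monotone $T$ and $\varepsilon\ge0$, $T^\varepsilon=\{(x,x^* )\mid \langle x-y,x^*-y^*\rangle\ge-\varepsilon\ \forall (y,y^* )\in T\}$, and $T$ is non-enlargeable if $T^\varepsilon=T$ for all $\varepsilon\ge0$. The Fitzpatrick function is $\varphi_T(x,x^* )=\sup_{(y,y^* )\in T}\big(\langle x,y^*\rangle+\langle y,x^*\rangle-\langle y,y^*\rangle\big)$. *)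

theory Defs
  imports "HOL-Analysis.Analysis" "HOL-Library.Extended_Real"
begin

text \<open>The dual space X* of a real Banach space X is modelled as the space of bounded
  linear functionals (blinfun to real); the pairing is evaluation.\<close>

definition pairing :: "'a::real_normed_vector \<Rightarrow> ('a \<Rightarrow>\<^sub>L real) \<Rightarrow> real" where
  "pairing x xs = blinfun_apply xs x"

definition monotone_op :: "('a::real_normed_vector \<times> ('a \<Rightarrow>\<^sub>L real)) set \<Rightarrow> bool" where
  "monotone_op T \<longleftrightarrow>
     (\<forall>x xs y ys. (x, xs) \<in> T \<longrightarrow> (y, ys) \<in> T \<longrightarrow> pairing (x - y) (xs - ys) \<ge> 0)"

definition maximal_monotone :: "('a::real_normed_vector \<times> ('a \<Rightarrow>\<^sub>L real)) set \<Rightarrow> bool" where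
  "maximal_monotone T \<longleftrightarrow> monotone_op T \<and> (\<forall>S. monotone_op S \<longrightarrow> T \<subseteq> S \<longrightarrow> S = T)"

definition self_cancelling :: "('a::real_normed_vector \<times> ('a \<Rightarrow>\<^sub>L real)) set \<Rightarrow> bool" where
  "self_cancelling A \<longleftrightarrow> subspace A \<and> (\<forall>x xs. (x, xs) \<in> A \<longrightarrow> pairing x xs = 0)"

definition perp :: "('a::real_normed_vector \<times> ('a \<Rightarrow>\<^sub>L real)) set
    \<Rightarrow> ('a \<times> ('a \<Rightarrow>\<^sub>L real)) set" where
  "perp B = {(y, ys). \<forall>x xs. (x, xs) \<in> B \<longrightarrow> pairing x ys + pairing y xs = 0}"

definition enlargement :: "('a::real_normed_vector \<times> ('a \<Rightarrow>\<^sub>L real)) set \<Rightarrow> real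
    \<Rightarrow> ('a \<times> ('a \<Rightarrow>\<^sub>L real)) set" where
  "enlargement T \<epsilon> = {(x, xs). \<forall>y ys. (y, ys) \<in> T \<longrightarrow> pairing (x - y) (xs - ys) \<ge> - \<epsilon>}"

definition non_enlargeable :: "('a::real_normed_vector \<times> ('a \<Rightarrow>\<^sub>L real)) set \<Rightarrow> bool" where
  "non_enlargeable T \<longleftrightarrow> maximal_monotone T \<and> (\<forall>\<epsilon>\<ge>0. enlargement T \<epsilon> = T)"

definition fitzpatrick :: "('a::real_normed_vector \<times> ('a \<Rightarrow>\<^sub>L real)) set
    \<Rightarrow> 'a \<Rightarrow> ('a \<Rightarrow>\<^sub>L real) \<Rightarrow> ereal" where
  "fitzpatrick T x xs =
     (SUP p\<in>T. ereal (pairing x (snd p) + pairing (fst p) xs - pairing (fst p) (snd p)))"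

end

theory Submission
  imports Defs
begin

text \<open>Translation preserves maximal monotonicity, and since the
  Fitzpatrick function dominates every enlargement, it suffices to show that
  \<open>\<phi>\<^sub>T(x, x\<^sup>*) < \<infinity>\<close> forces \<open>(x, x\<^sup>*) \<in> T\<close>. Self-cancellation gives \<open>A \<subseteq> A\<^sup>\<turnstile>\<close>, so for
  \<open>(a, a\<^sup>*) \<in> A\<close> the whole line \<open>(x\<^sub>0, x\<^sub>0\<^sup>*) + t(a, a\<^sup>*)\<close> lies in \<open>T\<close>. Along it the quantity
  maximised in \<open>\<phi>\<^sub>T(x, x\<^sup>*)\<close> is affine in \<open>t\<close> (the quadratic term \<open>t\<^sup>2\<langle>a, a\<^sup>*\<rangle>\<close> vanishes),
  so a finite bound forces its slope \<open>\<langle>a, x\<^sup>* - x\<^sub>0\<^sup>*\<rangle> + \<langle>x - x\<^sub>0, a\<^sup>*\<rangle>\<close> to vanish, i.e.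
  \<open>(x - x\<^sub>0, x\<^sup>* - x\<^sub>0\<^sup>*) \<in> A\<^sup>\<turnstile>\<close>.\<close>

lemma pairing_simps [simp]:
  "pairing (x + y) f = pairing x f + pairing y f"
  "pairing x (f + g) = pairing x f + pairing x g"
  "pairing (x - y) f = pairing x f - pairing y f"
  "pairing x (f - g) = pairing x f - pairing x g"
  "pairing (c *\<^sub>R x) f = c * pairing x f"
  "pairing x (c *\<^sub>R f) = c * pairing x f"
  by (simp_all add: pairing_def blinfun.bilinear_simps)

lemma bounded_above_linear_eq_0:
  fixes L K :: real
  assumes "\<And>t. t * L \<le> K"
  shows "L = 0"
proof (rule ccontr)
  assume "L \<noteq> 0"
  moreover have "((K + 1) / L) * L \<le> K" by (rule assms)
  ultimately show False by simp
qed

definition translate :: "'a::ab_group_add \<Rightarrow> 'b::ab_group_add \<Rightarrow> ('a \<times> 'b) set \<Rightarrow> ('a \<times> 'b) set"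
  where "translate x0 x0s B = (\<lambda>(y, ys). (y + x0, ys + x0s)) ` B"

lemma mem_translate_iff: "(x, xs) \<in> translate x0 x0s B \<longleftrightarrow> (x - x0, xs - x0s) \<in> B"
proof
  assume "(x, xs) \<in> translate x0 x0s B"
  then show "(x - x0, xs - x0s) \<in> B" by (auto simp: translate_def)
next
  assume "(x - x0, xs - x0s) \<in> B"
  then show "(x, xs) \<in> translate x0 x0s B"
    unfolding translate_def by (rule image_eqI[rotated]) simp
qed

lemma translate_translate_minus: "translate (- x0) (- x0s) (translate x0 x0s B) = B"
  by (auto simp: mem_translate_iff)

lemma monotone_op_translate:
  assumes "monotone_op B"
  shows "monotone_op (translate x0 x0s B)"
  unfolding monotone_op_def
proof (intro allI impI)
  fix x xs y ys
  assume "(x, xs) \<in> translate x0 x0s B" "(y, ys) \<in> translate x0 x0s B"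
  then have "(x - x0, xs - x0s) \<in> B" "(y - x0, ys - x0s) \<in> B"
    by (simp_all add: mem_translate_iff)
  then have "pairing ((x - x0) - (y - x0)) ((xs - x0s) - (ys - x0s)) \<ge> 0"
    using assms unfolding monotone_op_def by blast
  then show "pairing (x - y) (xs - ys) \<ge> 0" by simp
qed

lemma translate_mono: "B \<subseteq> C \<Longrightarrow> translate x0 x0s B \<subseteq> translate x0 x0s C"
  by (auto simp: translate_def)

lemma maximal_monotone_translate:
  assumes "maximal_monotone B"
  shows "maximal_monotone (translate x0 x0s B)"
  unfolding maximal_monotone_def
proof (intro conjI allI impI)
  show "monotone_op (translate x0 x0s B)"
    using assms by (simp add: maximal_monotone_def monotone_op_translate)
next
  fix S
  assume "monotone_op S" and "translate x0 x0s B \<subseteq> S"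
  then have "monotone_op (translate (- x0) (- x0s) S)" and "B \<subseteq> translate (- x0) (- x0s) S"
    using monotone_op_translate translate_mono[of _ S "- x0" "- x0s"]
      translate_translate_minus[of x0 x0s B]
    by metis+
  with assms have "translate (- x0) (- x0s) S = B"
    by (simp add: maximal_monotone_def)
  then show "S = translate x0 x0s B"
    using translate_translate_minus[of "- x0" "- x0s" S] by simp
qed

lemma subset_enlargement:
  assumes "monotone_op T" and "e \<ge> 0"
  shows "T \<subseteq> enlargement T e"
proof clarify
  fix x xs assume "(x, xs) \<in> T"
  with assms have "pairing (x - y) (xs - ys) \<ge> - e" if "(y, ys) \<in> T" for y ys
    using that unfolding monotone_op_def by fastforce
  then show "(x, xs) \<in> enlargement T e" by (simp add: enlargement_def)
qed

lemma fitzpatrick_le_enlargement: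
  assumes "(x, xs) \<in> enlargement T e"
  shows "fitzpatrick T x xs \<le> ereal (pairing x xs + e)"
  unfolding fitzpatrick_def
proof (rule SUP_least)
  fix p assume "p \<in> T"
  moreover obtain y ys where p: "p = (y, ys)" by fastforce
  ultimately have "pairing (x - y) (xs - ys) \<ge> - e"
    using assms unfolding enlargement_def by auto
  then show "ereal (pairing x (snd p) + pairing (fst p) xs - pairing (fst p) (snd p))
      \<le> ereal (pairing x xs + e)"
    by (simp add: p)
qed

lemma non_enlargeable_if_fitzpatrick_finite_subset:
  assumes "maximal_monotone T"
    and "\<And>x xs. fitzpatrick T x xs < \<infinity> \<Longrightarrow> (x, xs) \<in> T"
  shows "non_enlargeable T \<and> {(x, xs). fitzpatrick T x xs < \<infinity>} = T"
proof
  have mon: "monotone_op T" using assms(1) by (simp add: maximal_monotone_def)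
  have "enlargement T e \<subseteq> T" for e
  proof clarify
    fix x xs assume "(x, xs) \<in> enlargement T e"
    then have "fitzpatrick T x xs < \<infinity>"
      by (rule le_less_trans[OF fitzpatrick_le_enlargement]) simp
    then show "(x, xs) \<in> T" by (rule assms(2))
  qed
  with assms(1) subset_enlargement[OF mon] show "non_enlargeable T"
    by (simp add: non_enlargeable_def subset_antisym)
  have "T \<subseteq> {(x, xs). fitzpatrick T x xs < \<infinity>}"
  proof clarify
    fix x xs assume "(x, xs) \<in> T"
    then have "(x, xs) \<in> enlargement T 0" using subset_enlargement[OF mon order.refl] by blast
    then show "fitzpatrick T x xs < \<infinity>"
      by (rule le_less_trans[OF fitzpatrick_le_enlargement]) simp
  qed
  with assms(2) show "{(x, xs). fitzpatrick T x xs < \<infinity>} = T" by auto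
qed

lemma self_cancelling_subset_perp:
  assumes "self_cancelling A"
  shows "A \<subseteq> perp A"
proof (clarsimp simp: perp_def)
  fix a as b bs assume a: "(a, as) \<in> A" and b: "(b, bs) \<in> A"
  have sub: "subspace A" and zero: "\<And>x xs. (x, xs) \<in> A \<Longrightarrow> pairing x xs = 0"
    using assms by (auto simp: self_cancelling_def)
  have "(b + a, bs + as) \<in> A" using subspace_add[OF sub b a] by simp
  from zero[OF this] zero[OF a] zero[OF b] show "pairing b as + pairing a bs = 0" by simp
qed

lemma fitzpatrick_finite_imp_mem_translate_perp:
  assumes sc: "self_cancelling A"
    and fin: "fitzpatrick (translate x0 x0s (perp A)) x xs < \<infinity>"
  shows "(x, xs) \<in> translate x0 x0s (perp A)"
proof -
  let ?T = "translate x0 x0s (perp A)"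
  obtain M where M: "fitzpatrick ?T x xs \<le> ereal M"
    using fin by (cases "fitzpatrick ?T x xs") auto
  have bound: "pairing x ys + pairing y xs - pairing y ys \<le> M" if "(y, ys) \<in> ?T" for y ys
    using order_trans[OF SUP_upper[OF that] M[unfolded fitzpatrick_def]] by simp
  have "pairing a (xs - x0s) + pairing (x - x0) as = 0" if a: "(a, as) \<in> A" for a as
  proof -
    have aa: "pairing a as = 0" using sc a by (simp add: self_cancelling_def)
    let ?slope = "pairing x as + pairing a xs - pairing a x0s - pairing x0 as"
    have "t * ?slope \<le> M - (pairing x x0s + pairing x0 xs - pairing x0 x0s)" for t
    proof -
      have "t *\<^sub>R (a, as) \<in> A"
        using sc a subspace_scale[of A "(a, as)" t] by (simp add: self_cancelling_def)
      then have "(t *\<^sub>R a + x0, t *\<^sub>R as + x0s) \<in> ?T"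
        using self_cancelling_subset_perp[OF sc] by (auto simp: mem_translate_iff)
      from bound[OF this] aa show ?thesis by (simp add: algebra_simps)
    qed
    then have "?slope = 0" by (rule bounded_above_linear_eq_0)
    then show ?thesis by simp
  qed
  then show ?thesis by (simp add: mem_translate_iff perp_def)
qed

theorem lemma3:
  fixes A :: "('a::banach \<times> ('a \<Rightarrow>\<^sub>L real)) set"
    and x0 :: 'a and x0s :: "'a \<Rightarrow>\<^sub>L real"
  assumes "self_cancelling A"
    and "maximal_monotone (perp A)"
  defines "T \<equiv> (\<lambda>(y, ys). (y + x0, ys + x0s)) ` perp A"
  shows "non_enlargeable T \<and> {(x, xs). fitzpatrick T x xs < \<infinity>} = T"
proof -
  have T: "T = translate x0 x0s (perp A)" by (simp add: T_def translate_def)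
  show ?thesis
    unfolding T
    using maximal_monotone_translate[OF assms(2)]
      fitzpatrick_finite_imp_mem_translate_perp[OF assms(1)]
    by (rule non_enlargeable_if_fitzpatrick_finite_subset)
qed

end
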